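(* Let $n\in\mathbb N$ and suppose $\vartheta_n\equiv1$. For $h\in\mathsf F(\mathcal X_n)$ let $\bar h(\bar x_n)=h(\bar x^2_n)$. Then $\bar\eta_n\bar h=\eta_nh$ and, for every $\ell\in\llbracket0,n\rrbracket$, $\bar\sigma^2_{\ell,n}(\bar h)=\sigma^2_{\ell,n}(h)$. More generally, for every $m\in\mathbb N^*$ and every $f\in\mathsf F(\mathcal X_m)$ with $\bar f(\bar x_m)=f(\bar x^2_m)$, one has $\bar\eta_m\bar f=\eta_m(\vartheta_mf)/\eta_m\vartheta_m$.
   Context: Notation: $\mathbb N=\{0,1,2,\dots\}$, $\mathbb N^*=\mathbb N\setminus\{0\}$; $\llbracket m,n\rrbracket=\{k\in\mathbb N: m\le k\le n\}$; for a measure $\mu$, a (possibly unnormalised) kernel $K$ and a bounded measurable $h$: $\mu h=\int h\,d\mu$, $Kh(x)=\int h(y)K(x,dy)$, $\mu K(A)=\int K(x,A)\mu(dx)$, $KL(x,A)=\int K(x,dy)L(y,A)$. $\mathsf F(\mathcal X)$ denotes the set of bounded measurable real functions on $(\mathsf X,\mathcal X)$. Model: $(\mathsf X_n,\mathcal X_n)_{n\in\mathbb N}$ are measurable spaces; for each $n$, $L_n:\mathsf X_n\times\mathcal X_{n+1}\to\mathbb R_+$ is a kernel with $\sup_{x}L_n\mathbf 1_{\mathsf X_{n+1}}(x)<\infty$; $L_{k:m}=L_kL_{k+1}\cdots L_m$ if $k\le m$ and $L_{k:m}=\mathrm{id}$ otherwise; $\chi$ is a finite measure on $\mathcal X_0$;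 $\eta_n=\chi L_{0:n-1}/(\chi L_{0:n-1}\mathbf 1_{\mathsf X_n})$ (normalising constants assumed positive and finite). Algorithmic ingredients: a probability measure $\nu$ on $\mathcal X_0$ with $\chi\ll\nu$ and $w_{-1}=d\chi/d\nu$; measurable positive functions $\vartheta_n$ on $\mathsf X_n$ (adjustment multipliers); Markov kernels $P_n$ from $\mathsf X_n$ to $\mathcal X_{n+1}$ and measurable $w_n:\mathsf X_n\times\mathsf X_{n+1}\to\mathbb R_+$ with $\int h(y)L_n(x,dy)=\int h(y)w_n(x,y)P_n(x,dy)$ for all $x\in\mathsf X_n$, $h\in\mathsf F(\mathcal X_{n+1})$. Assume all quantities below are finite (e.g. $\vartheta_m$, $w_m/\vartheta_m$, $w_{-1}$ bounded). Asymptotic variance: for $h\in\mathsf F(\mathcal X_n)$ and $\ell\in\llbracket0,n\rrbracket$, $$\sigma^2_{\ell,n}(h)=\mathbf 1_{\{\ell=0\}}\frac{\chi\big(w_{-1}\{L_{0:n-1}(h-\eta_nh)\}^2\big)}{(\chi L_{0:n-1}\mathbf 1_{\mathsf X_n})^2}+\sum_{m=(\ell-1)\vee0}^{n-1}\eta_m\vartheta_m\,\frac{\int\eta_m(dx)\,\vartheta_m(x)^{-1}\int L_m(x,dy)\,w_m(x,y)\{L_{m+1:n-1}(h-\eta_nh)(y)\}^2}{(\eta_mL_{m:n-1}\mathbf 1_{\mathsf X_n})^2}.$$ Auxiliary Feynman–Kac model: $\bar{\mathsf X}_0=\mathsf X_0$ and $\bar{\mathsf X}_n=\mathsf X_{n-1}\times\mathsf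 X_n$ for $n\ge1$, elements $\bar x_n=(\bar x^1_n,\bar x^2_n)$, with the convention $\bar x_0^2=\bar x_0$. Potentials $\bar g_0(x_0)=\vartheta_0(x_0)w_{-1}(x_0)$ and $\bar g_n(\bar x_n)=w_{n-1}(\bar x_n^1,\bar x_n^2)\vartheta_n(\bar x_n^2)/\vartheta_{n-1}(\bar x^1_n)$ for $n\ge1$; Markov kernels $\bar M_n(\bar x_n,d\bar x_{n+1})=\delta_{\bar x^2_n}(d\bar x^1_{n+1})\,P_n(\bar x^1_{n+1},d\bar x^2_{n+1})$. Set $\bar L_n(\bar x_n,d\bar x_{n+1})=\bar M_n(\bar x_n,d\bar x_{n+1})\bar g_{n+1}(\bar x_{n+1})$, $\bar L_{k:m}$ the corresponding products, $\bar\chi(d\bar x_0)=\bar g_0(\bar x_0)\nu(d\bar x_0)$ and $\bar\eta_m=\bar\chi\bar L_{0:m-1}/\bar\chi\bar L_{0:m-1}\mathbf 1$. Let $\bar\sigma^2_{\ell,n}$ denote the asymptotic variance formula above applied to this auxiliary model with initial measure $\bar\chi$, kernels $\bar L_m$, initial density $\bar g_0$ in place of $w_{-1}$, adjustment multipliers identically $1$, and $\bar g_{m+1}(\bar y)$ in place of $w_m(x,y)$, i.e. $$\bar\sigma^2_{\ell,n}(\bar h)=\mathbf 1_{\{\ell=0\}}\frac{\bar\chi(\bar g_0\{\bar L_{0:n-1}(\bar h-\bar\eta_n\bar h)\}^2)}{(\bar\chi\bar L_{0:n-1}\mathbf 1)^2}+\sum_{m=(\ell-1)\vee0}^{n-1}\frac{\bar\eta_m\bar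 L_m(\bar g_{m+1}\{\bar L_{m+1:n-1}(\bar h-\bar\eta_n\bar h)\}^2)}{(\bar\eta_m\bar L_{m:n-1}\mathbf 1)^2}.$$ *)

theory Defs
  imports "HOL-Probability.Probability"
begin

text \<open>Kernels are represented as functions from points to (unnormalised, finite) measures.
  Applying a kernel to a function: (K h)(x) = integral of h against K(x,-).\<close>

definition kapply :: "('b \<Rightarrow> 'b measure) \<Rightarrow> ('b \<Rightarrow> real) \<Rightarrow> 'b \<Rightarrow> real" where
  "kapply K h = (\<lambda>x. integral\<^sup>L (K x) h)"

fun Lprod :: "(nat \<Rightarrow> 'b \<Rightarrow> 'b measure) \<Rightarrow> nat \<Rightarrow> nat \<Rightarrow> ('b \<Rightarrow> real) \<Rightarrow> 'b \<Rightarrow> real" where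
  "Lprod L k 0 h = h"
| "Lprod L k (Suc j) h = kapply (L k) (Lprod L (Suc k) j h)"

text \<open>Lseg L k n h = L_{k:n-1} h, i.e. L_k ... L_{n-1} h, the identity if k \<ge> n.\<close>
definition Lseg :: "(nat \<Rightarrow> 'b \<Rightarrow> 'b measure) \<Rightarrow> nat \<Rightarrow> nat \<Rightarrow> ('b \<Rightarrow> real) \<Rightarrow> 'b \<Rightarrow> real" where
  "Lseg L k n h = Lprod L k (n - k) h"

definition fk_eta :: "'b measure \<Rightarrow> (nat \<Rightarrow> 'b \<Rightarrow> 'b measure) \<Rightarrow> nat \<Rightarrow> ('b \<Rightarrow> real) \<Rightarrow> real" where
  "fk_eta chi L n h = integral\<^sup>L chi (Lseg L 0 n h) / integral\<^sup>L chi (Lseg L 0 n (\<lambda>_. 1))"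

text \<open>Asymptotic variance sigma^2_{l,n}(h) with initial density w0 (= w_{-1}),
  adjustment multipliers theta and weights w.\<close>
definition asym_var :: "'b measure \<Rightarrow> (nat \<Rightarrow> 'b \<Rightarrow> 'b measure) \<Rightarrow> ('b \<Rightarrow> real) \<Rightarrow>
    (nat \<Rightarrow> 'b \<Rightarrow> real) \<Rightarrow> (nat \<Rightarrow> 'b \<Rightarrow> 'b \<Rightarrow> real) \<Rightarrow> nat \<Rightarrow> nat \<Rightarrow> ('b \<Rightarrow> real) \<Rightarrow> real" where
  "asym_var chi L w0 theta w l n h =
    (let hc = (\<lambda>x. h x - fk_eta chi L n h) in
      (if l = 0 then integral\<^sup>L chi (\<lambda>x. w0 x * (Lseg L 0 n hc x)\<^sup>2)
                      / (integral\<^sup>L chi (Lseg L 0 n (\<lambda>_. 1)))\<^sup>2 else 0)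
    + (\<Sum>m\<in>{l - 1..<n}.
         fk_eta chi L m (theta m)
         * fk_eta chi L m (\<lambda>x. inverse (theta m x)
               * integral\<^sup>L (L m x) (\<lambda>y. w m x y * (Lseg L (Suc m) n hc y)\<^sup>2))
         / (fk_eta chi L m (Lseg L m n (\<lambda>_. 1)))\<^sup>2))"

text \<open>Auxiliary model. Points of bar X_n are pairs (x^1, x^2); bar X_0 = X_0 is embedded
  diagonally via x \<mapsto> (x, x), so that the second component is x (convention bar x_0^2 = bar x_0).\<close>
definition gbar :: "('a \<Rightarrow> real) \<Rightarrow> (nat \<Rightarrow> 'a \<Rightarrow> real) \<Rightarrow> (nat \<Rightarrow> 'a \<Rightarrow> 'a \<Rightarrow> real)
    \<Rightarrow> nat \<Rightarrow> 'a \<times> 'a \<Rightarrow> real" where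
  "gbar wm1 theta w n z =
     (if n = 0 then theta 0 (snd z) * wm1 (snd z)
      else w (n - 1) (fst z) (snd z) * theta n (snd z) / theta (n - 1) (fst z))"

text \<open>bar L_n(bar x_n, d bar x_{n+1}) = delta_{bar x_n^2}(d bar x^1_{n+1}) P_n(bar x^1_{n+1}, d bar x^2_{n+1})
  bar g_{n+1}(bar x_{n+1}).\<close>
definition Lbar :: "(nat \<Rightarrow> 'a measure) \<Rightarrow> (nat \<Rightarrow> 'a \<Rightarrow> 'a measure) \<Rightarrow> (nat \<Rightarrow> 'a \<times> 'a \<Rightarrow> real)
    \<Rightarrow> nat \<Rightarrow> 'a \<times> 'a \<Rightarrow> ('a \<times> 'a) measure" where
  "Lbar M P g n z = density (distr (P n (snd z)) (M n \<Otimes>\<^sub>M M (Suc n)) (\<lambda>y. (snd z, y)))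
                            (\<lambda>z'. ennreal (g (Suc n) z'))"

definition chibar :: "(nat \<Rightarrow> 'a measure) \<Rightarrow> 'a measure \<Rightarrow> (nat \<Rightarrow> 'a \<times> 'a \<Rightarrow> real) \<Rightarrow> ('a \<times> 'a) measure" where
  "chibar M nu g = density (distr nu (M 0 \<Otimes>\<^sub>M M 0) (\<lambda>x. (x, x))) (\<lambda>z. ennreal (g 0 z))"

end

theory Submission
  imports Defs
begin

text \<open>In the auxiliary model a function of the second coordinate stays a function of the second
  coordinate: the kernel bar L_k acts on it through Q_k(x, dy) = P_k(x, dy) bar g_{k+1}(x, y) on X_k.
  Since bar g_{k+1} = w_k theta_{k+1} / theta_k, i.e. Q_k = theta_k^{-1} L_k theta_{k+1}, products
  telescope, L_{k:k+j-1}(theta_{k+j} f) = theta_k Q_{k:k+j-1} f, and the initial weight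
  bar g_0 = theta_0 w_{-1} supplies the remaining theta_0. Hence
  bar chi bar L_{0:m-1} bar f = chi L_{0:m-1}(theta_m f) for every m, which is the formula for
  bar eta_m. When theta_n = 1 the same identities match the two variance formulas summand by summand;
  the factor theta_m of the original summand is absorbed by eta_m(theta_m f) / eta_m theta_m.\<close>

definition bounded_borel :: "'a measure \<Rightarrow> ('a \<Rightarrow> real) \<Rightarrow> bool" where
  "bounded_borel N f \<longleftrightarrow> f \<in> borel_measurable N \<and> (\<exists>B. \<forall>x\<in>space N. \<bar>f x\<bar> \<le> B)"

lemma bounded_borelI:
  "f \<in> borel_measurable N \<Longrightarrow> (\<And>x. x \<in> space N \<Longrightarrow> \<bar>f x\<bar> \<le> B) \<Longrightarrow> bounded_borel N f"
  unfolding bounded_borel_def by blast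

lemma bounded_borel_measurable: "bounded_borel N f \<Longrightarrow> f \<in> borel_measurable N"
  unfolding bounded_borel_def by blast

lemma bounded_borel_const [simp]: "bounded_borel N (\<lambda>_. c)"
  by (rule bounded_borelI[where B = "\<bar>c\<bar>"]) auto

lemma bounded_borel_mult:
  assumes "bounded_borel N f" "bounded_borel N g"
  shows "bounded_borel N (\<lambda>x. f x * g x)"
proof -
  obtain Bf Bg where Bf: "\<forall>x\<in>space N. \<bar>f x\<bar> \<le> Bf" and Bg: "\<forall>x\<in>space N. \<bar>g x\<bar> \<le> Bg"
    using assms unfolding bounded_borel_def by blast
  show ?thesis
  proof (rule bounded_borelI[where B = "Bf * Bg"])
    show "(\<lambda>x. f x * g x) \<in> borel_measurable N"
      using assms by (intro borel_measurable_times bounded_borel_measurable)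
    fix x assume "x \<in> space N"
    then show "\<bar>f x * g x\<bar> \<le> Bf * Bg"
      unfolding abs_mult using Bf Bg by (intro mult_mono) auto
  qed
qed

lemma bounded_borel_diff:
  assumes "bounded_borel N f" "bounded_borel N g"
  shows "bounded_borel N (\<lambda>x. f x - g x)"
proof -
  obtain Bf Bg where Bf: "\<forall>x\<in>space N. \<bar>f x\<bar> \<le> Bf" and Bg: "\<forall>x\<in>space N. \<bar>g x\<bar> \<le> Bg"
    using assms unfolding bounded_borel_def by blast
  show ?thesis
  proof (rule bounded_borelI[where B = "Bf + Bg"])
    show "(\<lambda>x. f x - g x) \<in> borel_measurable N"
      using assms by (intro borel_measurable_diff bounded_borel_measurable)
    fix x assume "x \<in> space N"
    then show "\<bar>f x - g x\<bar> \<le> Bf + Bg"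
      using Bf Bg abs_triangle_ineq4[of "f x" "g x"] by fastforce
  qed
qed

lemma bounded_borel_cong_sets:
  assumes "sets N = sets N'"
  shows "bounded_borel N f = bounded_borel N' f"
  unfolding bounded_borel_def measurable_cong_sets[OF assms refl] sets_eq_imp_space_eq[OF assms] ..

lemma bounded_borel_comp_snd: "bounded_borel B f \<Longrightarrow> bounded_borel (A \<Otimes>\<^sub>M B) (\<lambda>z. f (snd z))"
  unfolding bounded_borel_def by (auto simp: space_pair_measure)

lemma bounded_borel_Pair:
  assumes "bounded_borel (A \<Otimes>\<^sub>M B) F" "x \<in> space A"
  shows "bounded_borel B (\<lambda>y. F (x, y))"
proof -
  have "Pair x \<in> B \<rightarrow>\<^sub>M A \<Otimes>\<^sub>M B" using assms(2) by simp
  from measurable_compose[OF this bounded_borel_measurable[OF assms(1)]]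
  have "(\<lambda>y. F (x, y)) \<in> borel_measurable B" by (simp add: comp_def)
  moreover obtain C where "\<forall>z\<in>space (A \<Otimes>\<^sub>M B). \<bar>F z\<bar> \<le> C"
    using assms(1) unfolding bounded_borel_def by blast
  ultimately show ?thesis
    using assms(2) by (intro bounded_borelI[where B = C]) (auto simp: space_pair_measure)
qed

lemma bounded_borel_integral_kernel:
  assumes K: "K \<in> A \<rightarrow>\<^sub>M prob_algebra B" and F: "bounded_borel (A \<Otimes>\<^sub>M B) F"
  shows "bounded_borel A (\<lambda>x. integral\<^sup>L (K x) (\<lambda>y. F (x, y)))"
proof -
  obtain C where C: "\<forall>z\<in>space (A \<Otimes>\<^sub>M B). \<bar>F z\<bar> \<le> C"
    using F unfolding bounded_borel_def by blast
  have F_meas: "F \<in> borel_measurable (A \<Otimes>\<^sub>M B)"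
    using F by (rule bounded_borel_measurable)
  have K_sub: "K \<in> A \<rightarrow>\<^sub>M subprob_algebra B"
    using K by (rule measurable_prob_algebraD)
  have K_sets: "sets (K x) = sets B" if "x \<in> space A" for x
    using K_sub that by (rule subprob_measurableD)
  have "(\<lambda>x. integral\<^sup>L (distr (K x) (A \<Otimes>\<^sub>M B) (Pair x)) F) \<in> borel_measurable A"
    by (rule measurable_compose[OF measurable_distr2[OF _ K_sub]
          integral_measurable_subprob_algebra[OF F_meas]]) simp
  then have meas: "(\<lambda>x. integral\<^sup>L (K x) (\<lambda>y. F (x, y))) \<in> borel_measurable A"
  proof (rule measurable_cong[THEN iffD1, rotated])
    fix x assume x: "x \<in> space A"
    have "Pair x \<in> K x \<rightarrow>\<^sub>M A \<Otimes>\<^sub>M B"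
      using x by (simp add: measurable_cong_sets[OF K_sets[OF x] refl])
    then show "integral\<^sup>L (distr (K x) (A \<Otimes>\<^sub>M B) (Pair x)) F = integral\<^sup>L (K x) (\<lambda>y. F (x, y))"
      using F_meas by (simp add: integral_distr)
  qed
  show ?thesis
  proof (rule bounded_borelI[OF meas])
    fix x assume x: "x \<in> space A"
    interpret prob_space "K x"
      using measurable_space[OF K x] by (simp add: space_prob_algebra)
    have Fx: "bounded_borel (K x) (\<lambda>y. F (x, y))"
      using bounded_borel_Pair[OF F x] unfolding bounded_borel_cong_sets[OF K_sets[OF x]] .
    have bound: "\<bar>F (x, y)\<bar> \<le> C" if "y \<in> space (K x)" for y
      using C x that sets_eq_imp_space_eq[OF K_sets[OF x]] by (auto simp: space_pair_measure)
    have int: "integrable (K x) (\<lambda>y. F (x, y))"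
      using Fx bound by (intro integrable_const_bound[where B = C]) (auto simp: bounded_borel_def)
    have "\<bar>integral\<^sup>L (K x) (\<lambda>y. F (x, y))\<bar> \<le> integral\<^sup>L (K x) (\<lambda>y. \<bar>F (x, y)\<bar>)"
      by (rule integral_abs_bound)
    also have "\<dots> \<le> C"
      using int bound by (intro integral_le_const) auto
    finally show "\<bar>integral\<^sup>L (K x) (\<lambda>y. F (x, y))\<bar> \<le> C" .
  qed
qed

fun Qprod :: "(nat \<Rightarrow> 'a \<Rightarrow> 'a measure) \<Rightarrow> (nat \<Rightarrow> 'a \<times> 'a \<Rightarrow> real) \<Rightarrow> nat \<Rightarrow> nat \<Rightarrow>
    ('a \<Rightarrow> real) \<Rightarrow> 'a \<Rightarrow> real" where
  "Qprod P g k 0 f = f"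
| "Qprod P g k (Suc j) f = (\<lambda>x. integral\<^sup>L (P k x) (\<lambda>y. g (Suc k) (x, y) * Qprod P g (Suc k) j f y))"

locale aux_model =
  fixes M :: "nat \<Rightarrow> 'a measure"
    and L P :: "nat \<Rightarrow> 'a \<Rightarrow> 'a measure"
    and chi nu :: "'a measure"
    and wm1 :: "'a \<Rightarrow> real"
    and theta :: "nat \<Rightarrow> 'a \<Rightarrow> real"
    and w :: "nat \<Rightarrow> 'a \<Rightarrow> 'a \<Rightarrow> real"
  assumes L_sets: "\<And>k x. x \<in> space (M k) \<Longrightarrow> sets (L k x) = sets (M (Suc k))"
    and nu_sets: "sets nu = sets (M 0)"
    and wm1_meas: "wm1 \<in> borel_measurable (M 0)"
    and wm1_nonneg: "\<And>x. x \<in> space (M 0) \<Longrightarrow> 0 \<le> wm1 x"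
    and chi_dens: "chi = density nu (\<lambda>x. ennreal (wm1 x))"
    and norm_pos: "\<And>k. integral\<^sup>L chi (Lseg L 0 k (\<lambda>_. 1)) > 0"
    and theta_meas: "\<And>k. theta k \<in> borel_measurable (M k)"
    and theta_pos: "\<And>k x. x \<in> space (M k) \<Longrightarrow> 0 < theta k x"
    and theta_bdd: "\<And>k. \<exists>B. \<forall>x\<in>space (M k). theta k x \<le> B"
    and P_kernel: "\<And>k. P k \<in> M k \<rightarrow>\<^sub>M prob_algebra (M (Suc k))"
    and w_meas: "\<And>k. (\<lambda>(x, y). w k x y) \<in> borel_measurable (M k \<Otimes>\<^sub>M M (Suc k))"
    and w_nonneg: "\<And>k x y. x \<in> space (M k) \<Longrightarrow> y \<in> space (M (Suc k)) \<Longrightarrow> 0 \<le> w k x y"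
    and w_bdd: "\<And>k. \<exists>B. \<forall>x\<in>space (M k). \<forall>y\<in>space (M (Suc k)). w k x y / theta k x \<le> B"
    and L_wP: "\<And>k x g. x \<in> space (M k) \<Longrightarrow> g \<in> borel_measurable (M (Suc k)) \<Longrightarrow>
                 (\<exists>B. \<forall>y\<in>space (M (Suc k)). \<bar>g y\<bar> \<le> B) \<Longrightarrow>
                 integral\<^sup>L (L k x) g = integral\<^sup>L (P k x) (\<lambda>y. g y * w k x y)"
begin

abbreviation "gb \<equiv> gbar wm1 theta w"
abbreviation "Lb \<equiv> Lbar M P gb"
abbreviation "chib \<equiv> chibar M nu gb"

lemma gb_0: "gb 0 z = theta 0 (snd z) * wm1 (snd z)"
  by (simp add: gbar_def)

lemma gb_Suc: "gb (Suc k) z = w k (fst z) (snd z) * theta (Suc k) (snd z) / theta k (fst z)"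
  by (simp add: gbar_def)

lemma P_sets: "x \<in> space (M k) \<Longrightarrow> sets (P k x) = sets (M (Suc k))"
  using measurable_space[OF P_kernel] by (auto simp: space_prob_algebra)

lemma space_L: "x \<in> space (M k) \<Longrightarrow> space (L k x) = space (M (Suc k))"
  using L_sets by (rule sets_eq_imp_space_eq)

lemma space_Lbar: "space (Lb k z) = space (M k \<Otimes>\<^sub>M M (Suc k))"
  by (simp add: Lbar_def)

lemma space_nu: "space nu = space (M 0)"
  using nu_sets by (rule sets_eq_imp_space_eq)

lemma space_chi: "space chi = space (M 0)"
  by (simp add: chi_dens space_nu)

lemma space_chibar: "space chib = space (M 0 \<Otimes>\<^sub>M M 0)"
  by (simp add: chibar_def)

lemma bounded_borel_theta: "bounded_borel (M k) (theta k)"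
proof -
  obtain B where "\<forall>x\<in>space (M k). theta k x \<le> B"
    using theta_bdd by blast
  then show ?thesis
    using theta_pos by (intro bounded_borelI[OF theta_meas, where B = B]) (simp add: less_imp_le)
qed

lemma gb_Suc_nonneg: "z \<in> space (M k \<Otimes>\<^sub>M M (Suc k)) \<Longrightarrow> 0 \<le> gb (Suc k) z"
  using w_nonneg theta_pos by (auto simp: gb_Suc space_pair_measure less_imp_le)

lemma bounded_borel_gb_Suc: "bounded_borel (M k \<Otimes>\<^sub>M M (Suc k)) (gb (Suc k))"
proof -
  have [measurable]: "theta k \<in> borel_measurable (M k)"
    using theta_meas by blast
  obtain B where B: "\<forall>x\<in>space (M k). \<forall>y\<in>space (M (Suc k)). w k x y / theta k x \<le> B"
    using w_bdd by blast
  have "(\<lambda>z. w k (fst z) (snd z)) \<in> borel_measurable (M k \<Otimes>\<^sub>M M (Suc k))"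
    using w_meas[of k] by (simp add: case_prod_beta')
  then have "bounded_borel (M k \<Otimes>\<^sub>M M (Suc k)) (\<lambda>z. w k (fst z) (snd z) / theta k (fst z))"
    using B w_nonneg theta_pos
    by (intro bounded_borelI[where B = B]) (auto simp: space_pair_measure less_imp_le)
  from bounded_borel_mult[OF this bounded_borel_comp_snd[OF bounded_borel_theta]]
  show ?thesis
    by (simp add: gb_Suc[abs_def])
qed

lemma integral_Lbar:
  assumes z: "snd z \<in> space (M k)" and F: "F \<in> borel_measurable (M k \<Otimes>\<^sub>M M (Suc k))"
  shows "integral\<^sup>L (Lb k z) F = integral\<^sup>L (P k (snd z)) (\<lambda>y. gb (Suc k) (snd z, y) * F (snd z, y))"
proof -
  let ?D = "distr (P k (snd z)) (M k \<Otimes>\<^sub>M M (Suc k)) (\<lambda>y. (snd z, y))"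
  have Pair_meas: "(\<lambda>y. (snd z, y)) \<in> P k (snd z) \<rightarrow>\<^sub>M M k \<Otimes>\<^sub>M M (Suc k)"
    using z by (simp add: measurable_cong_sets[OF P_sets[OF z] refl])
  have gb_meas: "gb (Suc k) \<in> borel_measurable (M k \<Otimes>\<^sub>M M (Suc k))"
    using bounded_borel_gb_Suc by (rule bounded_borel_measurable)
  have "integral\<^sup>L (Lb k z) F = integral\<^sup>L ?D (\<lambda>z'. gb (Suc k) z' * F z')"
    unfolding Lbar_def using F gb_meas gb_Suc_nonneg
    by (subst integral_density) (auto intro!: AE_I2)
  also have "\<dots> = integral\<^sup>L (P k (snd z)) (\<lambda>y. gb (Suc k) (snd z, y) * F (snd z, y))"
    using Pair_meas gb_meas F by (subst integral_distr) auto
  finally show ?thesis .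
qed

lemma integral_L_theta:
  assumes x: "x \<in> space (M k)" and \<phi>: "bounded_borel (M (Suc k)) \<phi>"
  shows "integral\<^sup>L (L k x) (\<lambda>y. theta (Suc k) y * \<phi> y)
       = theta k x * integral\<^sup>L (P k x) (\<lambda>y. gb (Suc k) (x, y) * \<phi> y)"
proof -
  have "bounded_borel (M (Suc k)) (\<lambda>y. theta (Suc k) y * \<phi> y)"
    using bounded_borel_theta \<phi> by (rule bounded_borel_mult)
  then have "integral\<^sup>L (L k x) (\<lambda>y. theta (Suc k) y * \<phi> y)
      = integral\<^sup>L (P k x) (\<lambda>y. theta (Suc k) y * \<phi> y * w k x y)"
    using x by (intro L_wP) (auto simp: bounded_borel_def)
  also have "\<dots> = integral\<^sup>L (P k x) (\<lambda>y. theta k x * (gb (Suc k) (x, y) * \<phi> y))"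
    using theta_pos[OF x] by (intro Bochner_Integration.integral_cong) (auto simp: gb_Suc)
  finally show ?thesis
    by simp
qed

lemma bounded_borel_Qprod:
  "bounded_borel (M (k + j)) f \<Longrightarrow> bounded_borel (M k) (Qprod P gb k j f)"
proof (induction j arbitrary: k)
  case 0
  then show ?case by simp
next
  case (Suc j)
  then have "bounded_borel (M (Suc k)) (Qprod P gb (Suc k) j f)"
    by simp
  then have "bounded_borel (M k \<Otimes>\<^sub>M M (Suc k)) (\<lambda>z. gb (Suc k) z * Qprod P gb (Suc k) j f (snd z))"
    by (intro bounded_borel_mult bounded_borel_gb_Suc bounded_borel_comp_snd)
  from bounded_borel_integral_kernel[OF P_kernel this]
  show ?case
    by simp
qed

lemma Lprod_Lbar_eq_Qprod:
  assumes "bounded_borel (M (k + j)) f"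
    and "\<And>z. snd z \<in> space (M (k + j)) \<Longrightarrow> F z = f (snd z)"
    and "snd z \<in> space (M k)"
  shows "Lprod Lb k j F z = Qprod P gb k j f (snd z)"
  using assms
proof (induction j arbitrary: k z)
  case 0
  then show ?case by simp
next
  case (Suc j)
  have "bounded_borel (M (Suc k)) (Qprod P gb (Suc k) j f)"
    using Suc.prems(1) by (intro bounded_borel_Qprod) simp
  then have Q_meas: "(\<lambda>y. Qprod P gb (Suc k) j f (snd y)) \<in> borel_measurable (M k \<Otimes>\<^sub>M M (Suc k))"
    by (intro bounded_borel_measurable bounded_borel_comp_snd)
  have "Lprod Lb k (Suc j) F z = integral\<^sup>L (Lb k z) (\<lambda>y. Qprod P gb (Suc k) j f (snd y))"
    unfolding Lprod.simps kapply_def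
  proof (rule Bochner_Integration.integral_cong[OF refl])
    fix y assume "y \<in> space (Lb k z)"
    then have "snd y \<in> space (M (Suc k))"
      by (auto simp: space_Lbar space_pair_measure)
    then show "Lprod Lb (Suc k) j F y = Qprod P gb (Suc k) j f (snd y)"
      using Suc.prems by (intro Suc.IH) auto
  qed
  also have "\<dots> = Qprod P gb k (Suc j) f (snd z)"
    using integral_Lbar[OF Suc.prems(3) Q_meas] by simp
  finally show ?case .
qed

lemma Lprod_theta_eq_Qprod:
  assumes "bounded_borel (M (k + j)) f"
    and "\<And>y. y \<in> space (M (k + j)) \<Longrightarrow> F y = theta (k + j) y * f y"
    and "x \<in> space (M k)"
  shows "Lprod L k j F x = theta k x * Qprod P gb k j f x"
  using assms
proof (induction j arbitrary: k x)
  case 0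
  then show ?case by simp
next
  case (Suc j)
  have Q: "bounded_borel (M (Suc k)) (Qprod P gb (Suc k) j f)"
    using Suc.prems(1) by (intro bounded_borel_Qprod) simp
  have "Lprod L k (Suc j) F x = integral\<^sup>L (L k x) (\<lambda>y. theta (Suc k) y * Qprod P gb (Suc k) j f y)"
    unfolding Lprod.simps kapply_def
  proof (rule Bochner_Integration.integral_cong[OF refl])
    fix y assume "y \<in> space (L k x)"
    then have "y \<in> space (M (Suc k))"
      using space_L[OF Suc.prems(3)] by simp
    then show "Lprod L (Suc k) j F y = theta (Suc k) y * Qprod P gb (Suc k) j f y"
      using Suc.prems by (intro Suc.IH) auto
  qed
  also have "\<dots> = theta k x * Qprod P gb k (Suc j) f x"
    using integral_L_theta[OF Suc.prems(3) Q] by simp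
  finally show ?case .
qed

lemma integral_chibar_snd:
  assumes [measurable]: "\<Phi> \<in> borel_measurable (M 0)"
  shows "integral\<^sup>L chib (\<lambda>z. \<Phi> (snd z)) = integral\<^sup>L chi (\<lambda>x. theta 0 x * \<Phi> x)"
proof -
  let ?D = "distr nu (M 0 \<Otimes>\<^sub>M M 0) (\<lambda>x. (x, x))"
  have [measurable]: "theta 0 \<in> borel_measurable (M 0)" "wm1 \<in> borel_measurable (M 0)"
    using theta_meas wm1_meas by blast+
  have gb_0_meas: "gb 0 \<in> borel_measurable ?D"
    unfolding gb_0[abs_def] by simp
  have gb_0_nonneg: "AE z in ?D. 0 \<le> gb 0 z"
    using theta_pos wm1_nonneg by (intro AE_I2) (auto simp: gb_0 space_pair_measure less_imp_le)
  have diag_meas: "(\<lambda>x. (x, x)) \<in> nu \<rightarrow>\<^sub>M M 0 \<Otimes>\<^sub>M M 0"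
    unfolding measurable_cong_sets[OF nu_sets refl] by simp
  have \<Phi>_snd_meas: "(\<lambda>z. \<Phi> (snd z)) \<in> borel_measurable ?D"
    by simp
  have "integral\<^sup>L chib (\<lambda>z. \<Phi> (snd z)) = integral\<^sup>L ?D (\<lambda>z. gb 0 z * \<Phi> (snd z))"
    using integral_density[OF \<Phi>_snd_meas gb_0_meas gb_0_nonneg]
    unfolding chibar_def by (simp only: real_scaleR_def)
  also have "\<dots> = integral\<^sup>L nu (\<lambda>x. wm1 x * (theta 0 x * \<Phi> x))"
    by (subst integral_distr[OF diag_meas]) (simp_all add: gb_0 mult_ac)
  also have "\<dots> = integral\<^sup>L chi (\<lambda>x. theta 0 x * \<Phi> x)"
  proof -
    have "(\<lambda>x. theta 0 x * \<Phi> x) \<in> borel_measurable nu" "wm1 \<in> borel_measurable nu"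
      unfolding measurable_cong_sets[OF nu_sets refl] by simp_all
    moreover have "AE x in nu. 0 \<le> wm1 x"
      using wm1_nonneg by (intro AE_I2) (simp add: space_nu)
    ultimately show ?thesis
      unfolding chi_dens by (simp add: integral_density)
  qed
  finally show ?thesis .
qed

lemma integral_chibar_Lseg:
  assumes f: "bounded_borel (M m) f"
    and F': "\<And>z. snd z \<in> space (M m) \<Longrightarrow> F' z = f (snd z)"
    and F: "\<And>y. y \<in> space (M m) \<Longrightarrow> F y = theta m y * f y"
  shows "integral\<^sup>L chib (Lseg Lb 0 m F') = integral\<^sup>L chi (Lseg L 0 m F)"
proof -
  have "bounded_borel (M 0) (Qprod P gb 0 m f)"
    using f by (intro bounded_borel_Qprod) simp
  then have Q_meas: "Qprod P gb 0 m f \<in> borel_measurable (M 0)"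
    by (rule bounded_borel_measurable)
  have "integral\<^sup>L chib (Lseg Lb 0 m F') = integral\<^sup>L chib (\<lambda>z. Qprod P gb 0 m f (snd z))"
    unfolding Lseg_def diff_zero
  proof (rule Bochner_Integration.integral_cong[OF refl])
    fix z assume "z \<in> space chib"
    then show "Lprod Lb 0 m F' z = Qprod P gb 0 m f (snd z)"
      using f F' by (intro Lprod_Lbar_eq_Qprod[where k = 0, simplified])
        (auto simp: space_chibar space_pair_measure)
  qed
  also have "\<dots> = integral\<^sup>L chi (\<lambda>x. theta 0 x * Qprod P gb 0 m f x)"
    using Q_meas by (rule integral_chibar_snd)
  also have "\<dots> = integral\<^sup>L chi (Lseg L 0 m F)"
    unfolding Lseg_def diff_zero
  proof (rule Bochner_Integration.integral_cong[OF refl])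
    fix x assume "x \<in> space chi"
    then show "theta 0 x * Qprod P gb 0 m f x = Lprod L 0 m F x"
      using f F Lprod_theta_eq_Qprod[of 0 m f F x] by (simp add: space_chi)
  qed
  finally show ?thesis .
qed

lemma fk_eta_bar:
  assumes f: "bounded_borel (M m) f"
    and F': "\<And>z. snd z \<in> space (M m) \<Longrightarrow> F' z = f (snd z)"
    and F: "\<And>y. y \<in> space (M m) \<Longrightarrow> F y = theta m y * f y"
    and \<Theta>: "\<And>y. y \<in> space (M m) \<Longrightarrow> \<Theta> y = theta m y"
  shows "fk_eta chib Lb m F' = fk_eta chi L m F / fk_eta chi L m \<Theta>"
proof -
  have denominator: "integral\<^sup>L chib (Lseg Lb 0 m (\<lambda>_. 1)) = integral\<^sup>L chi (Lseg L 0 m \<Theta>)"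
    by (rule integral_chibar_Lseg[where f = "\<lambda>_. 1"]) (simp_all add: \<Theta>)
  have numerator: "integral\<^sup>L chib (Lseg Lb 0 m F') = integral\<^sup>L chi (Lseg L 0 m F)"
    using f F' F by (rule integral_chibar_Lseg)
  have "integral\<^sup>L chi (Lseg L 0 m (\<lambda>_. 1)) \<noteq> 0"
    using norm_pos[of m] by simp
  then show ?thesis
    unfolding fk_eta_def numerator denominator by (simp add: divide_divide_eq_left)
qed

lemma Lseg_Lbar_eq_Qprod:
  assumes "k \<le> n" "bounded_borel (M n) g" "snd z \<in> space (M k)"
  shows "Lseg Lb k n (\<lambda>z. g (snd z)) z = Qprod P gb k (n - k) g (snd z)"
  unfolding Lseg_def using assms by (intro Lprod_Lbar_eq_Qprod) simp_all

end

locale aux_model_terminal = aux_model +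
  fixes n :: nat
  assumes theta_n: "\<And>x. x \<in> space (M n) \<Longrightarrow> theta n x = 1"
begin

lemma Lseg_eq_Qprod:
  assumes "k \<le> n" "bounded_borel (M n) g" "x \<in> space (M k)"
  shows "Lseg L k n g x = theta k x * Qprod P gb k (n - k) g x"
  unfolding Lseg_def using assms by (intro Lprod_theta_eq_Qprod) (simp_all add: theta_n)

lemma fk_eta_bar_terminal:
  assumes "bounded_borel (M n) f" "\<And>z. snd z \<in> space (M n) \<Longrightarrow> F' z = f (snd z)"
  shows "fk_eta chib Lb n F' = fk_eta chi L n f"
proof -
  have "fk_eta chib Lb n F' = fk_eta chi L n f / fk_eta chi L n (\<lambda>_. 1)"
    using assms by (rule fk_eta_bar) (simp_all add: theta_n)
  also have "fk_eta chi L n (\<lambda>_. 1) = 1"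
    using norm_pos[of n] by (simp add: fk_eta_def)
  finally show ?thesis
    by simp
qed

lemma asym_var_initial_term_bar:
  assumes g: "bounded_borel (M n) g"
  shows "integral\<^sup>L chib (\<lambda>z. gb 0 z * (Lseg Lb 0 n (\<lambda>z. g (snd z)) z)\<^sup>2)
           / (integral\<^sup>L chib (Lseg Lb 0 n (\<lambda>_. 1)))\<^sup>2
       = integral\<^sup>L chi (\<lambda>x. wm1 x * (Lseg L 0 n g x)\<^sup>2) / (integral\<^sup>L chi (Lseg L 0 n (\<lambda>_. 1)))\<^sup>2"
proof -
  define Q where "Q = Qprod P gb 0 n g"
  have "bounded_borel (M 0) Q"
    unfolding Q_def using g by (intro bounded_borel_Qprod) simp
  then have [measurable]: "Q \<in> borel_measurable (M 0)"
    by (rule bounded_borel_measurable)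
  have [measurable]: "theta 0 \<in> borel_measurable (M 0)" "wm1 \<in> borel_measurable (M 0)"
    using theta_meas wm1_meas by blast+
  have "integral\<^sup>L chib (\<lambda>z. gb 0 z * (Lseg Lb 0 n (\<lambda>z. g (snd z)) z)\<^sup>2)
      = integral\<^sup>L chib (\<lambda>z. theta 0 (snd z) * wm1 (snd z) * (Q (snd z))\<^sup>2)"
    using g by (intro Bochner_Integration.integral_cong refl)
      (simp add: Lseg_Lbar_eq_Qprod gb_0 Q_def space_chibar space_pair_measure mem_Times_iff)
  also have "\<dots> = integral\<^sup>L chi (\<lambda>x. theta 0 x * (theta 0 x * wm1 x * (Q x)\<^sup>2))"
    by (rule integral_chibar_snd) measurable
  also have "\<dots> = integral\<^sup>L chi (\<lambda>x. wm1 x * (Lseg L 0 n g x)\<^sup>2)"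
    using g by (intro Bochner_Integration.integral_cong refl)
      (simp add: Lseg_eq_Qprod Q_def space_chi power2_eq_square)
  moreover have "integral\<^sup>L chib (Lseg Lb 0 n (\<lambda>_. 1)) = integral\<^sup>L chi (Lseg L 0 n (\<lambda>_. 1))"
    by (rule integral_chibar_Lseg[where f = "\<lambda>_. 1"]) (simp_all add: theta_n)
  ultimately show ?thesis
    by simp
qed

lemma integral_Lbar_Lseg_square:
  assumes "m < n" "bounded_borel (M n) g" "snd z \<in> space (M m)"
  shows "integral\<^sup>L (Lb m z) (\<lambda>y. gb (Suc m) y * (Lseg Lb (Suc m) n (\<lambda>z. g (snd z)) y)\<^sup>2)
       = integral\<^sup>L (P m (snd z)) (\<lambda>y. (gb (Suc m) (snd z, y) * Qprod P gb (Suc m) (n - Suc m) g y)\<^sup>2)"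
proof -
  let ?Q = "Qprod P gb (Suc m) (n - Suc m) g"
  have "bounded_borel (M (Suc m)) ?Q"
    using assms by (intro bounded_borel_Qprod) simp
  then have "(\<lambda>y. gb (Suc m) y * (?Q (snd y))\<^sup>2) \<in> borel_measurable (M m \<Otimes>\<^sub>M M (Suc m))"
    unfolding power2_eq_square
    by (intro bounded_borel_measurable bounded_borel_mult bounded_borel_gb_Suc bounded_borel_comp_snd)
  then have "integral\<^sup>L (Lb m z) (\<lambda>y. gb (Suc m) y * (?Q (snd y))\<^sup>2)
      = integral\<^sup>L (P m (snd z)) (\<lambda>y. (gb (Suc m) (snd z, y) * ?Q y)\<^sup>2)"
    using assms(3) by (simp add: integral_Lbar power2_eq_square mult_ac)
  moreover have "integral\<^sup>L (Lb m z) (\<lambda>y. gb (Suc m) y * (Lseg Lb (Suc m) n (\<lambda>z. g (snd z)) y)\<^sup>2)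
      = integral\<^sup>L (Lb m z) (\<lambda>y. gb (Suc m) y * (?Q (snd y))\<^sup>2)"
    using assms by (intro Bochner_Integration.integral_cong refl)
      (simp add: Lseg_Lbar_eq_Qprod space_Lbar space_pair_measure mem_Times_iff)
  ultimately show ?thesis
    by simp
qed

lemma integral_L_Lseg_square:
  assumes "m < n" "bounded_borel (M n) g" and u: "u \<in> space (M m)"
  shows "inverse (theta m u) * integral\<^sup>L (L m u) (\<lambda>y. w m u y * (Lseg L (Suc m) n g y)\<^sup>2)
       = theta m u * integral\<^sup>L (P m u) (\<lambda>y. (gb (Suc m) (u, y) * Qprod P gb (Suc m) (n - Suc m) g y)\<^sup>2)"
proof -
  let ?Q = "Qprod P gb (Suc m) (n - Suc m) g"
  have Q: "bounded_borel (M (Suc m)) ?Q"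
    using assms by (intro bounded_borel_Qprod) simp
  have gb_u: "bounded_borel (M (Suc m)) (\<lambda>y. gb (Suc m) (u, y))"
    using bounded_borel_gb_Suc u by (rule bounded_borel_Pair)
  have "integral\<^sup>L (L m u) (\<lambda>y. w m u y * (Lseg L (Suc m) n g y)\<^sup>2)
      = integral\<^sup>L (L m u) (\<lambda>y. theta (Suc m) y * (theta m u * gb (Suc m) (u, y) * (?Q y)\<^sup>2))"
    using assms theta_pos[OF u]
    by (intro Bochner_Integration.integral_cong refl)
      (simp add: Lseg_eq_Qprod space_L gb_Suc power2_eq_square)
  also have "\<dots> = theta m u * integral\<^sup>L (P m u) (\<lambda>y. gb (Suc m) (u, y) * (theta m u * gb (Suc m) (u, y) * (?Q y)\<^sup>2))"
    using Q gb_u unfolding power2_eq_square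
    by (intro integral_L_theta u bounded_borel_mult bounded_borel_const)
  also have "\<dots> = (theta m u)\<^sup>2 * integral\<^sup>L (P m u) (\<lambda>y. (gb (Suc m) (u, y) * ?Q y)\<^sup>2)"
    by (simp add: power2_eq_square mult_ac)
  finally show ?thesis
    using theta_pos[OF u] by (simp add: power2_eq_square)
qed

lemma asym_var_summand_bar:
  assumes "m < n" "bounded_borel (M n) g"
  shows "fk_eta chib Lb m (\<lambda>_. 1)
           * fk_eta chib Lb m (\<lambda>x. inverse 1 * integral\<^sup>L (Lb m x)
               (\<lambda>y. gb (Suc m) y * (Lseg Lb (Suc m) n (\<lambda>z. g (snd z)) y)\<^sup>2))
           / (fk_eta chib Lb m (Lseg Lb m n (\<lambda>_. 1)))\<^sup>2
       = fk_eta chi L m (theta m)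
           * fk_eta chi L m (\<lambda>x. inverse (theta m x) * integral\<^sup>L (L m x)
               (\<lambda>y. w m x y * (Lseg L (Suc m) n g y)\<^sup>2))
           / (fk_eta chi L m (Lseg L m n (\<lambda>_. 1)))\<^sup>2"
proof -
  define Q where "Q = Qprod P gb (Suc m) (n - Suc m) g"
  define R where "R = (\<lambda>u. integral\<^sup>L (P m u) (\<lambda>y. (gb (Suc m) (u, y) * Q y)\<^sup>2))"
  have "bounded_borel (M (Suc m)) Q"
    unfolding Q_def using assms by (intro bounded_borel_Qprod) simp
  then have "bounded_borel (M m \<Otimes>\<^sub>M M (Suc m)) (\<lambda>z. (gb (Suc m) z * Q (snd z))\<^sup>2)"
    unfolding power2_eq_square
    by (intro bounded_borel_mult bounded_borel_gb_Suc bounded_borel_comp_snd)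
  from bounded_borel_integral_kernel[OF P_kernel this]
  have R: "bounded_borel (M m) R"
    by (simp add: R_def)
  define t where "t = fk_eta chi L m (theta m)"
  have one: "fk_eta chib Lb m (\<lambda>_. 1) = t / t"
    unfolding t_def by (rule fk_eta_bar[where f = "\<lambda>_. 1"]) simp_all
  have integrand: "fk_eta chib Lb m (\<lambda>x. inverse 1 * integral\<^sup>L (Lb m x)
               (\<lambda>y. gb (Suc m) y * (Lseg Lb (Suc m) n (\<lambda>z. g (snd z)) y)\<^sup>2))
      = fk_eta chi L m (\<lambda>x. inverse (theta m x) * integral\<^sup>L (L m x)
               (\<lambda>y. w m x y * (Lseg L (Suc m) n g y)\<^sup>2)) / t"
    unfolding t_def
  proof (rule fk_eta_bar[OF R])
    fix z :: "'a \<times> 'a" assume "snd z \<in> space (M m)"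
    from integral_Lbar_Lseg_square[OF assms this]
    show "inverse 1 * integral\<^sup>L (Lb m z)
        (\<lambda>y. gb (Suc m) y * (Lseg Lb (Suc m) n (\<lambda>z. g (snd z)) y)\<^sup>2) = R (snd z)"
      by (simp add: R_def Q_def)
  next
    fix x assume "x \<in> space (M m)"
    from integral_L_Lseg_square[OF assms this]
    show "inverse (theta m x) * integral\<^sup>L (L m x) (\<lambda>y. w m x y * (Lseg L (Suc m) n g y)\<^sup>2)
        = theta m x * R x"
      by (simp only: R_def Q_def)
  qed simp
  have "bounded_borel (M m) (Qprod P gb m (n - m) (\<lambda>_. 1))"
    using assms by (intro bounded_borel_Qprod) simp
  then have norm: "fk_eta chib Lb m (Lseg Lb m n (\<lambda>_. 1)) = fk_eta chi L m (Lseg L m n (\<lambda>_. 1)) / t"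
    unfolding t_def
  proof (rule fk_eta_bar)
    fix z :: "'a \<times> 'a" assume "snd z \<in> space (M m)"
    then show "Lseg Lb m n (\<lambda>_. 1) z = Qprod P gb m (n - m) (\<lambda>_. 1) (snd z)"
      using assms Lseg_Lbar_eq_Qprod[of m n "\<lambda>_. 1" z] by simp
  next
    fix x assume "x \<in> space (M m)"
    then show "Lseg L m n (\<lambda>_. 1) x = theta m x * Qprod P gb m (n - m) (\<lambda>_. 1) x"
      using assms by (intro Lseg_eq_Qprod) simp_all
  qed simp_all
  show ?thesis
    unfolding one integrand norm t_def[symmetric]
    by (cases "t = 0"; cases "fk_eta chi L m (Lseg L m n (\<lambda>_. 1)) = 0")
      (simp_all add: field_simps power2_eq_square)
qed

lemma asym_var_bar:
  assumes h: "bounded_borel (M n) h"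
  shows "asym_var chib Lb (gb 0) (\<lambda>_ _. 1) (\<lambda>k _ y. gb (Suc k) y) l n (\<lambda>z. h (snd z))
       = asym_var chi L wm1 theta w l n h"
proof -
  define c where "c = fk_eta chi L n h"
  have centre: "fk_eta chib Lb n (\<lambda>z. h (snd z)) = c"
    unfolding c_def using h by (rule fk_eta_bar_terminal) simp
  have hc: "bounded_borel (M n) (\<lambda>x. h x - c)"
    using h by (intro bounded_borel_diff) simp_all
  show ?thesis
    unfolding asym_var_def Let_def centre c_def[symmetric]
    using asym_var_initial_term_bar[OF hc] asym_var_summand_bar[OF _ hc]
    by (intro arg_cong2[where f = "(+)"] sum.cong) auto
qed

end

theorem mainTheorem9:
  fixes M :: "nat \<Rightarrow> 'a measure"
    and L P :: "nat \<Rightarrow> 'a \<Rightarrow> 'a measure"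
    and chi nu :: "'a measure"
    and wm1 :: "'a \<Rightarrow> real"
    and theta :: "nat \<Rightarrow> 'a \<Rightarrow> real"
    and w :: "nat \<Rightarrow> 'a \<Rightarrow> 'a \<Rightarrow> real"
    and n :: nat
    and h :: "'a \<Rightarrow> real"
  assumes L_sets: "\<And>k x. x \<in> space (M k) \<Longrightarrow> sets (L k x) = sets (M (Suc k))"
    and L_meas: "\<And>k A. A \<in> sets (M (Suc k)) \<Longrightarrow> (\<lambda>x. emeasure (L k x) A) \<in> borel_measurable (M k)"
    and L_bdd: "\<And>k. \<exists>B. \<forall>x\<in>space (M k). emeasure (L k x) (space (M (Suc k))) \<le> ennreal B"
    and nu_prob: "prob_space nu"
    and nu_sets: "sets nu = sets (M 0)"
    and wm1_meas: "wm1 \<in> borel_measurable (M 0)"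
    and wm1_nonneg: "\<And>x. x \<in> space (M 0) \<Longrightarrow> 0 \<le> wm1 x"
    and wm1_bdd: "\<exists>B. \<forall>x\<in>space (M 0). wm1 x \<le> B"
    and chi_dens: "chi = density nu (\<lambda>x. ennreal (wm1 x))"
    and norm_pos: "\<And>k. integral\<^sup>L chi (Lseg L 0 k (\<lambda>_. 1)) > 0"
    and theta_meas: "\<And>k. theta k \<in> borel_measurable (M k)"
    and theta_pos: "\<And>k x. x \<in> space (M k) \<Longrightarrow> 0 < theta k x"
    and theta_bdd: "\<And>k. \<exists>B. \<forall>x\<in>space (M k). theta k x \<le> B"
    and P_kernel: "\<And>k. P k \<in> M k \<rightarrow>\<^sub>M prob_algebra (M (Suc k))"
    and w_meas: "\<And>k. (\<lambda>(x, y). w k x y) \<in> borel_measurable (M k \<Otimes>\<^sub>M M (Suc k))"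
    and w_nonneg: "\<And>k x y. x \<in> space (M k) \<Longrightarrow> y \<in> space (M (Suc k)) \<Longrightarrow> 0 \<le> w k x y"
    and w_bdd: "\<And>k. \<exists>B. \<forall>x\<in>space (M k). \<forall>y\<in>space (M (Suc k)). w k x y / theta k x \<le> B"
    and L_wP: "\<And>k x g. x \<in> space (M k) \<Longrightarrow> g \<in> borel_measurable (M (Suc k)) \<Longrightarrow>
                 (\<exists>B. \<forall>y\<in>space (M (Suc k)). \<bar>g y\<bar> \<le> B) \<Longrightarrow>
                 integral\<^sup>L (L k x) g = integral\<^sup>L (P k x) (\<lambda>y. g y * w k x y)"
    and theta_n: "\<And>x. x \<in> space (M n) \<Longrightarrow> theta n x = 1"
    and h_meas: "h \<in> borel_measurable (M n)"
    and h_bdd: "\<exists>B. \<forall>x\<in>space (M n). \<bar>h x\<bar> \<le> B"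
  shows "fk_eta (chibar M nu (gbar wm1 theta w)) (Lbar M P (gbar wm1 theta w)) n (\<lambda>z. h (snd z))
           = fk_eta chi L n h
       \<and> (\<forall>l\<le>n.
            asym_var (chibar M nu (gbar wm1 theta w)) (Lbar M P (gbar wm1 theta w))
                     (gbar wm1 theta w 0) (\<lambda>_ _. 1) (\<lambda>k _ y. gbar wm1 theta w (Suc k) y)
                     l n (\<lambda>z. h (snd z))
            = asym_var chi L wm1 theta w l n h)
       \<and> (\<forall>m f. 1 \<le> m \<longrightarrow> f \<in> borel_measurable (M m) \<longrightarrow>
            (\<exists>B. \<forall>x\<in>space (M m). \<bar>f x\<bar> \<le> B) \<longrightarrow>
            fk_eta (chibar M nu (gbar wm1 theta w)) (Lbar M P (gbar wm1 theta w)) m (\<lambda>z. f (snd z))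
              = fk_eta chi L m (\<lambda>x. theta m x * f x) / fk_eta chi L m (theta m))"
proof -
  \<comment> \<open>L enters only through L_wP.\<close>
  interpret aux_model_terminal M L P chi nu wm1 theta w n
    by unfold_locales (fact L_sets nu_sets wm1_meas wm1_nonneg chi_dens norm_pos theta_meas
        theta_pos theta_bdd P_kernel w_meas w_nonneg w_bdd L_wP theta_n)+
  have h: "bounded_borel (M n) h"
    using h_meas h_bdd by (simp add: bounded_borel_def)
  show ?thesis
  proof (intro conjI allI impI)
    show "fk_eta chib Lb n (\<lambda>z. h (snd z)) = fk_eta chi L n h"
      using h by (rule fk_eta_bar_terminal) simp
    show "asym_var chib Lb (gb 0) (\<lambda>_ _. 1) (\<lambda>k _ y. gb (Suc k) y) l n (\<lambda>z. h (snd z))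
        = asym_var chi L wm1 theta w l n h" for l
      using h by (rule asym_var_bar)
    fix m :: nat and f :: "'a \<Rightarrow> real"
    assume "f \<in> borel_measurable (M m)" "\<exists>B. \<forall>x\<in>space (M m). \<bar>f x\<bar> \<le> B"
    then have "bounded_borel (M m) f"
      by (simp add: bounded_borel_def)
    then show "fk_eta chib Lb m (\<lambda>z. f (snd z))
        = fk_eta chi L m (\<lambda>x. theta m x * f x) / fk_eta chi L m (theta m)"
      by (rule fk_eta_bar) simp_all
  qed
qed

end
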